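(* Let $p\ge 2$, let $\mathcal{N}$ be a finite nonempty index set, let $\{\hat{\bm{\Sigma}}(t_i)\}_{i\in\mathcal{N}}$ be $p\times p$ symmetric positive semidefinite matrices with entries $\hat{\Sigma}_{uv}(t_i)$, and let $\lambda>0$. For a tuple $\mathbb{\Omega}=\{\bm{\Omega}(t_i)\}_{i\in\mathcal{N}}$ of $p\times p$ symmetric positive definite matrices define $$L(\mathbb{\Omega})=\frac{1}{\sqrt{|\mathcal{N}|}}\sum_{i\in\mathcal{N}}\Big[\operatorname{tr}\big(\bm{\Omega}(t_i)\hat{\bm{\Sigma}}(t_i)\big)-\log\det\bm{\Omega}(t_i)\Big]+\lambda\sum_{u\neq v}\sqrt{\sum_{i\in\mathcal{N}}\Omega_{uv}(t_i)^2},$$ and let $\{\hat{\bm{\Omega}}(t_i)\}_{i\in\mathcal{N}}$ be its minimizer over tuples of positive definite matrices. Let $\{G_1,G_2\}$ be a partition of $\{1,\dots,p\}$ into two disjoint sets. Then the variables in $G_1$ are completely disconnected from those in $G_2$ in all estimated precision matrices, i.e. $\hat{\Omega}_{uv}(t_i)=0$ for all $u\in G_1$, $v\in G_2$, $i\in\mathcal{N}$, if and only if $$\frac{1}{|\mathcal{N}|}\sum_{i\in\mathcal{N}}\hat{\Sigma}_{uv}(t_i)^2\le\lambda^2\qquad\text{for all } u\in G_1,\ v\in G_2.$$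
   Context: In the paper, $\mathcal{N}=\mathcal{N}_{k,d}=\{i:|t_i-t_k|\le d\}$ is the set of indices of observation times $0\le t_1\le\dots\le t_N\le 1$ within distance $d$ of $t_k$, and $\hat{\bm{\Sigma}}(t)=\sum_{j=1}^N \omega_h^{t_j}(t)\bm{x}_j\bm{x}_j^T$ is a kernel estimate of the covariance matrix, with weights $\omega_h^{t_j}(t)=K((t_j-t)/h)/\sum_{j'}K((t_{j'}-t)/h)$ for a symmetric nonnegative kernel $K$ and bandwidth $h>0$, based on observations $\bm{x}_j\in\mathbb{R}^p$. The objective $L$ is strictly convex, so its minimizer, when it exists, is unique. *)

theory Defs
  imports "HOL-Analysis.Analysis"
begin

definition sym_mat :: "real^'p^'p \<Rightarrow> bool" where
  "sym_mat A \<longleftrightarrow> transpose A = A"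

definition psd_mat :: "real^'p^'p \<Rightarrow> bool" where
  "psd_mat A \<longleftrightarrow> sym_mat A \<and> (\<forall>x. x \<bullet> (A *v x) \<ge> 0)"

definition pd_mat :: "real^'p^'p \<Rightarrow> bool" where
  "pd_mat A \<longleftrightarrow> sym_mat A \<and> (\<forall>x. x \<noteq> 0 \<longrightarrow> x \<bullet> (A *v x) > 0)"

definition L_obj :: "'i set \<Rightarrow> ('i \<Rightarrow> real^'p^'p) \<Rightarrow> real \<Rightarrow> ('i \<Rightarrow> real^'p^'p) \<Rightarrow> real" where
  "L_obj N S lam Om =
     (1 / sqrt (real (card N))) * (\<Sum>i\<in>N. trace (Om i ** S i) - ln (det (Om i)))
     + lam * (\<Sum>u\<in>UNIV. \<Sum>v\<in>UNIV - {u}. sqrt (\<Sum>i\<in>N. (Om i $ u $ v)\<^sup>2))"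

definition is_minimizer :: "'i set \<Rightarrow> ('i \<Rightarrow> real^'p^'p) \<Rightarrow> real \<Rightarrow> ('i \<Rightarrow> real^'p^'p) \<Rightarrow> bool" where
  "is_minimizer N S lam Omh \<longleftrightarrow>
     (\<forall>i\<in>N. pd_mat (Omh i)) \<and>
     (\<forall>Om. (\<forall>i\<in>N. pd_mat (Om i)) \<longrightarrow> L_obj N S lam Omh \<le> L_obj N S lam Om)"

end

theory Submission
  imports Defs
begin

text \<open>
  The objective splits into a part that only involves the diagonal entries and the
  log-determinants, and one term per ordered off-diagonal pair \<open>(u, v)\<close>, namely
  \<open>|N|^(-1/2) \<Sum>\<^sub>i \<Omega>\<^sub>i(u,v) S\<^sub>i(v,u) + \<lambda> (\<Sum>\<^sub>i \<Omega>\<^sub>i(u,v)\<^sup>2)^(1/2)\<close>. By Cauchy-Schwarz this term is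
  nonnegative whenever \<open>|N|\<inverse> \<Sum>\<^sub>i S\<^sub>i(u,v)\<^sup>2 \<le> \<lambda>\<^sup>2\<close>.

  If the bound holds across the partition, replacing every \<open>\<Omega>\<^sub>i\<close> by its block-diagonal part only
  drops nonnegative cross terms and, by Fischer's inequality, does not increase \<open>- log det\<close>.
  Minimality forces equality in Fischer's inequality, and its equality case says that the cross
  blocks vanish. Fischer's inequality reduces by block elimination to \<open>det Y < det (Y + M)\<close> for
  \<open>Y\<close> positive definite and \<open>M\<close> positive semidefinite and nonzero, which follows from writing
  \<open>M\<close> as a sum of rank-one matrices and the matrix determinant lemma.

  Conversely, if the minimizer is block diagonal and the bound fails for a cross pair \<open>(u, v)\<close>,
  move the entries \<open>(u, v)\<close> and \<open>(v, u)\<close> of every \<open>\<Omega>\<^sub>i\<close> by \<open>- t S\<^sub>i(u,v)\<close>. Conjugation by the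
  diagonal sign matrix of the partition shows that the log-determinants are even in \<open>t\<close>, hence
  stationary at \<open>t = 0\<close>, while the trace and penalty terms change linearly with negative slope;
  so the objective decreases for small \<open>t > 0\<close>.
\<close>

section \<open>Positive definite matrices\<close>

lemma matrix_add_rdistrib: "((A::real^'n^'m) + B) ** C = A ** C + B ** C"
  by (simp add: vec_eq_iff matrix_matrix_mult_def sum.distrib algebra_simps)

lemma matrix_diff_rdistrib: "((A::real^'n^'m) - B) ** C = A ** C - B ** C"
  by (simp add: vec_eq_iff matrix_matrix_mult_def sum_subtractf algebra_simps)

lemma matrix_diff_ldistrib: "(C::real^'n^'m) ** (A - B) = C ** A - C ** B"
  by (simp add: vec_eq_iff matrix_matrix_mult_def sum_subtractf algebra_simps)

lemma matrix_neg_mult: "(- (A::real^'n^'m)) ** B = - (A ** B)"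
  by (simp add: vec_eq_iff matrix_matrix_mult_def sum_negf)

lemma transpose_add: "transpose ((A::real^'n^'m) + B) = transpose A + transpose B"
  by (simp add: vec_eq_iff transpose_def)

lemma transpose_diff: "transpose ((A::real^'n^'m) - B) = transpose A - transpose B"
  by (simp add: vec_eq_iff transpose_def)

lemma inner_matrix_vector_transpose: "(x::real^'n) \<bullet> (A *v y) = (transpose A *v x) \<bullet> y"
  by (metis dot_lmul_matrix vector_transpose_matrix transpose_transpose)

lemma matrix_vector_axis_nth: "(A *v axis k (1::real)) $ j = A$j$k"
  by (simp add: matrix_vector_mult_def axis_def if_distrib cong: if_cong)

lemma left_inverse_eq_right_inverse:
  "(A::real^'n^'n) ** Z = mat 1 \<Longrightarrow> W ** A = mat 1 \<Longrightarrow> W = Z"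
  by (metis matrix_mul_assoc matrix_mul_lid matrix_mul_rid)

lemma sym_mat_nth: "sym_mat A \<Longrightarrow> A$j$k = A$k$j"
  unfolding sym_mat_def by (metis transpose_def vec_lambda_beta)

lemma pd_mat_sym: "pd_mat A \<Longrightarrow> transpose A = A"
  by (simp add: pd_mat_def sym_mat_def)

lemma psd_mat_sym: "psd_mat A \<Longrightarrow> transpose A = A"
  by (simp add: psd_mat_def sym_mat_def)

lemma pd_mat_mat_1: "pd_mat (mat 1 :: real^'n^'n)"
  by (auto simp: pd_mat_def sym_mat_def transpose_mat)

lemma pd_mat_kernel: "pd_mat A \<Longrightarrow> A *v x = 0 \<Longrightarrow> x = 0"
  unfolding pd_mat_def by (metis inner_zero_right less_irrefl)

lemma pd_mat_invertible: "pd_mat (A::real^'n^'n) \<Longrightarrow> invertible A"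
  unfolding invertible_left_inverse matrix_left_invertible_ker using pd_mat_kernel by blast

lemma pd_mat_convex_comb:
  assumes "pd_mat A" "pd_mat B" "0 \<le> s" "s \<le> 1"
  shows "pd_mat ((1 - s) *\<^sub>R A + s *\<^sub>R B)"
  unfolding pd_mat_def sym_mat_def
proof (intro conjI allI impI)
  show "transpose ((1 - s) *\<^sub>R A + s *\<^sub>R B) = (1 - s) *\<^sub>R A + s *\<^sub>R B"
    using assms by (simp add: transpose_add transpose_scalar pd_mat_sym)
next
  fix x :: "real^'a" assume "x \<noteq> 0"
  then have "x \<bullet> (A *v x) > 0" "x \<bullet> (B *v x) > 0" using assms by (auto simp: pd_mat_def)
  moreover have "x \<bullet> (((1 - s) *\<^sub>R A + s *\<^sub>R B) *v x) = (1 - s) * (x \<bullet> (A *v x)) + s * (x \<bullet> (B *v x))"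
    by (simp add: matrix_vector_mult_add_rdistrib scaleR_matrix_vector_assoc[symmetric] inner_add_right)
  ultimately show "x \<bullet> (((1 - s) *\<^sub>R A + s *\<^sub>R B) *v x) > 0"
    using assms(3,4) by (cases "s = 0") (auto intro: add_nonneg_pos)
qed

lemma pd_mat_add_psd_mat: "pd_mat A \<Longrightarrow> psd_mat B \<Longrightarrow> pd_mat (A + B)"
  unfolding pd_mat_def psd_mat_def sym_mat_def
  by (auto simp: matrix_vector_mult_add_rdistrib inner_add_right transpose_add intro: add_pos_nonneg)

lemma quadratic_form_congruence:
  "x \<bullet> ((C ** A ** transpose C) *v x) = (transpose C *v x) \<bullet> (A *v (transpose C *v x))"
  for x :: "real^'n" and C :: "real^'m^'n"
  by (simp add: matrix_vector_mul_assoc[symmetric] inner_matrix_vector_transpose[of x C])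

lemma pd_mat_imp_psd_mat: "pd_mat A \<Longrightarrow> psd_mat A"
  unfolding pd_mat_def psd_mat_def by (metis inner_zero_left less_eq_real_def)

lemma psd_mat_congruence:
  assumes "psd_mat A"
  shows "psd_mat (C ** A ** transpose C)"
  using assms unfolding psd_mat_def sym_mat_def quadratic_form_congruence
  by (simp add: matrix_transpose_mul matrix_mul_assoc)

lemma congruence_eq_0_imp_eq_0:
  assumes "pd_mat A" "C ** A ** transpose C = 0"
  shows "C = 0"
proof -
  have "transpose C *v x = 0" for x
    using assms quadratic_form_congruence[of x C A] unfolding pd_mat_def by force
  then show "C = 0"
    by (metis (no_types) matrix_vector_axis_nth transpose_def vec_eq_iff vec_lambda_beta zero_index)
qed

lemma invertible_matrix_vector_eq_0: "invertible (M::real^'n^'n) \<Longrightarrow> M *v x = 0 \<Longrightarrow> x = 0"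
  unfolding invertible_def by (metis matrix_vector_mul_assoc matrix_vector_mul_lid matrix_vector_mult_0_right)

lemma pd_mat_congruence:
  assumes "pd_mat A" "invertible (P::real^'n^'n)"
  shows "pd_mat (P ** A ** transpose P)"
  unfolding pd_mat_def sym_mat_def quadratic_form_congruence
proof (intro conjI allI impI)
  show "transpose (P ** A ** transpose P) = P ** A ** transpose P"
    using assms by (simp add: matrix_transpose_mul pd_mat_sym matrix_mul_assoc)
  fix x :: "real^'n" assume "x \<noteq> 0"
  then have "transpose P *v x \<noteq> 0"
    using invertible_matrix_vector_eq_0 transpose_invertible assms(2) by blast
  then show "0 < (transpose P *v x) \<bullet> (A *v (transpose P *v x))"
    using assms(1) by (simp add: pd_mat_def)
qed

lemma pd_mat_inverse:
  assumes "pd_mat (A::real^'n^'n)"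
  obtains Z where "A ** Z = mat 1" "Z ** A = mat 1" "pd_mat Z"
proof -
  obtain Z where Z: "A ** Z = mat 1" "Z ** A = mat 1"
    using pd_mat_invertible[OF assms] unfolding invertible_def by blast
  have "transpose Z ** A = mat 1"
    using Z(1) assms by (metis matrix_transpose_mul pd_mat_sym transpose_mat)
  then have "transpose Z = Z" using left_inverse_eq_right_inverse[OF Z(1)] by blast
  then have "Z ** A ** transpose Z = Z" by (simp add: Z(2))
  then have "pd_mat Z"
    using pd_mat_congruence[OF assms, of Z] Z unfolding invertible_def by metis
  with Z that show thesis by blast
qed

lemma pd_mat_quadratic_form_lower_bound:
  assumes "pd_mat (A::real^'n^'n)"
  obtains m where "m > 0" "\<And>x. m * (norm x)\<^sup>2 \<le> x \<bullet> (A *v x)"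
proof -
  let ?f = "\<lambda>x::real^'n. x \<bullet> (A *v x)"
  have "axis undefined 1 \<in> sphere (0::real^'n) 1" by simp
  then obtain x0 where x0: "x0 \<in> sphere 0 1" "\<And>y. y \<in> sphere 0 1 \<Longrightarrow> ?f x0 \<le> ?f y"
    using continuous_attains_inf[OF compact_sphere, of 0 1 ?f]
    by (fastforce intro: continuous_intros)
  have "x0 \<noteq> 0" using x0(1) by auto
  then have "?f x0 > 0" using assms by (simp add: pd_mat_def)
  moreover have "?f x0 * (norm x)\<^sup>2 \<le> ?f x" for x
  proof (cases "x = 0")
    case False
    have "?f x0 \<le> ?f ((1 / norm x) *\<^sub>R x)" using False by (intro x0(2)) simp
    also have "\<dots> = ?f x / (norm x)\<^sup>2"
      by (simp add: matrix_vector_mult_scaleR power2_eq_square)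
    finally show ?thesis using False by (simp add: pos_le_divide_eq)
  qed simp
  ultimately show thesis using that by blast
qed

lemma eventually_pd_mat_add:
  assumes "pd_mat (A::real^'n^'n)" "transpose E = E"
  shows "\<forall>\<^sub>F t in nhds 0. pd_mat (A + t *\<^sub>R E)"
proof -
  obtain m where m: "m > 0" "\<And>x. m * (norm x)\<^sup>2 \<le> x \<bullet> (A *v x)"
    using pd_mat_quadratic_form_lower_bound[OF assms(1)] by blast
  obtain K where K: "K > 0" "\<And>x. norm (E *v x) \<le> norm x * K"
    using bounded_linear.pos_bounded[OF matrix_vector_mul_bounded_linear] by blast
  have "pd_mat (A + t *\<^sub>R E)" if t: "\<bar>t\<bar> < m / K" for t
    unfolding pd_mat_def sym_mat_def
  proof (intro conjI allI impI)
    show "transpose (A + t *\<^sub>R E) = A + t *\<^sub>R E"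
      using assms by (simp add: transpose_add transpose_scalar pd_mat_sym)
    fix x :: "real^'n" assume "x \<noteq> 0"
    have "\<bar>x \<bullet> (E *v x)\<bar> \<le> norm x * (norm x * K)"
      using Cauchy_Schwarz_ineq2[of x "E *v x"] mult_left_mono[OF K(2)[of x] norm_ge_zero[of x]]
      by linarith
    then have "\<bar>t * (x \<bullet> (E *v x))\<bar> \<le> \<bar>t\<bar> * (norm x * (norm x * K))"
      unfolding abs_mult by (intro mult_left_mono) auto
    also have "\<dots> < m * (norm x)\<^sup>2"
      using t K(1) \<open>x \<noteq> 0\<close> by (simp add: power2_eq_square pos_less_divide_eq mult.assoc mult.left_commute)
    finally have "0 < x \<bullet> (A *v x) + t * (x \<bullet> (E *v x))"
      using m(2)[of x] by linarith
    then show "0 < x \<bullet> ((A + t *\<^sub>R E) *v x)"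
      by (simp add: matrix_vector_mult_add_rdistrib scaleR_matrix_vector_assoc[symmetric] inner_add_right)
  qed
  moreover have "m / K > 0" using m(1) K(1) by simp
  ultimately show ?thesis unfolding eventually_nhds_metric dist_real_def by auto
qed

section \<open>Determinants of positive definite matrices\<close>

lemma det_line_has_derivative:
  "\<exists>D. ((\<lambda>t. det (A + t *\<^sub>R B :: real^'n^'n)) has_field_derivative D) (at t0)"
proof -
  note [derivative_intros] = has_field_derivative_prod
  have "((\<lambda>t. \<Sum>p\<in>{p. p permutes UNIV}. of_int (sign p) * (\<Prod>i\<in>UNIV. A$i$p i + t * B$i$p i))
     has_field_derivative (\<Sum>p\<in>{p. p permutes UNIV}. of_int (sign p) *
       (\<Sum>x\<in>UNIV. B$x$p x * (\<Prod>y\<in>UNIV - {x}. A$y$p y + t0 * B$y$p y)))) (at t0)"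
    by (auto intro!: derivative_eq_intros simp: mult.commute)
  then show ?thesis by (auto simp: det_def)
qed

lemma det_pos_if_pd_mat:
  assumes "pd_mat (A::real^'n^'n)"
  shows "det A > 0"
proof (rule ccontr)
  assume "\<not> det A > 0"
  moreover have "isCont (\<lambda>t. det (mat 1 + t *\<^sub>R (A - mat 1) :: real^'n^'n)) t" for t
    using det_line_has_derivative DERIV_isCont by blast
  ultimately obtain t :: real where t: "0 \<le> t" "t \<le> 1" "det (mat 1 + t *\<^sub>R (A - mat 1)) = 0"
    using IVT2[of "\<lambda>t. det (mat 1 + t *\<^sub>R (A - mat 1) :: real^'n^'n)" 1 0 0] by auto
  have "mat 1 + t *\<^sub>R (A - mat 1) = (1 - t) *\<^sub>R mat 1 + t *\<^sub>R A"
    by (simp add: algebra_simps)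
  then have "pd_mat (mat 1 + t *\<^sub>R (A - mat 1))"
    using pd_mat_convex_comb[OF pd_mat_mat_1 assms t(1,2)] by simp
  then show False
    using t(3) pd_mat_invertible invertible_det_nz by blast
qed

lemma ln_det_line_has_derivative:
  assumes "det A > 0"
  shows "\<exists>D. ((\<lambda>t. ln (det (A + t *\<^sub>R E :: real^'n^'n))) has_field_derivative D) (at 0)"
proof -
  obtain D where "((\<lambda>t. det (A + t *\<^sub>R E)) has_field_derivative D) (at 0)"
    using det_line_has_derivative by blast
  from DERIV_chain2[OF DERIV_ln_divide this] assms show ?thesis by auto
qed

lemma det_rank_one_rows_with_row:
  fixes a b :: "real^'n"
  assumes "k \<notin> R"
  shows "det (\<chi> i. if i = k then b else if i \<in> R then axis i 1 + a$i *s b else axis i 1) = b$k"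
  using finite[of R] assms
proof (induction R rule: finite_induct)
  case empty
  have row: "row i (mat 1 :: real^'n^'n) = axis i 1" for i
    by (simp add: vec_eq_iff row_def mat_def axis_def)
  have "(\<chi> i. if i = k then b else if i \<in> {} then axis i 1 + a$i *s b else axis i 1)
      = (\<chi> i. if i = k then \<Sum>j\<in>UNIV. b$j *s row j (mat 1) else row i (mat 1 :: real^'n^'n))"
    unfolding row basis_expansion by (simp only: empty_iff if_False)
  then show ?case
    using cramer_lemma_transpose[of k b "mat 1 :: real^'n^'n"] by simp
next
  case (insert j R)
  let ?C = "\<lambda>i. if i = k then b else if i \<in> R then axis i 1 + a$i *s b else axis i 1"
  have "j \<noteq> k" using insert by auto
  have split: "(\<chi> i. if i = k then b else if i \<in> insert j R then axis i 1 + a$i *s b else axis i 1)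
      = (\<chi> i. if i = j then axis j 1 + a$j *s b else ?C i)"
    using \<open>j \<noteq> k\<close> by (simp add: vec_eq_iff)
  have unchanged: "(\<chi> i. if i = j then axis j 1 else ?C i) = (\<chi> i. ?C i)"
    using insert by (simp add: vec_eq_iff)
  have repeated: "det (\<chi> i. if i = j then b else ?C i) = 0"
    using \<open>j \<noteq> k\<close> by (intro det_identical_rows[of j k]) (simp_all add: row_def vec_eq_iff)
  show ?case
    unfolding split det_row_add[of j] det_row_mul[of j] unchanged repeated
    using insert.IH insert.prems by simp
qed

lemma det_rank_one_rows:
  fixes a b :: "real^'n"
  shows "det (\<chi> i. if i \<in> R then axis i 1 + a$i *s b else axis i 1) = 1 + (\<Sum>i\<in>R. a$i * b$i)"
  using finite[of R]
proof (induction R rule: finite_induct)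
  case empty
  have "(\<chi> i. (axis i 1 :: real^'n)) = mat 1" by (simp add: vec_eq_iff mat_def axis_def)
  then show ?case by simp
next
  case (insert k R)
  let ?C = "\<lambda>i. if i \<in> R then axis i 1 + a$i *s b else axis i 1"
  have split: "(\<chi> i. if i \<in> insert k R then axis i 1 + a$i *s b else axis i 1)
      = (\<chi> i. if i = k then axis k 1 + a$k *s b else ?C i)"
    by (simp add: vec_eq_iff)
  have unchanged: "(\<chi> i. if i = k then axis k 1 else ?C i) = (\<chi> i. ?C i)"
    using insert by (simp add: vec_eq_iff)
  show ?case
    unfolding split det_row_add[of k] det_row_mul[of k] unchanged
      det_rank_one_rows_with_row[OF insert(2)]
    using insert.IH insert.hyps by simp
qed

lemma det_mat_1_add_rank_one:
  "det (mat 1 + (\<chi> j k. a$j * b$k) :: real^'n^'n) = 1 + a \<bullet> b"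
proof -
  have "mat 1 + (\<chi> j k. a$j * b$k) = (\<chi> i. if i \<in> UNIV then axis i 1 + a$i *s b else (axis i 1 :: real^'n))"
    by (simp add: vec_eq_iff mat_def axis_def)
  then show ?thesis using det_rank_one_rows[of UNIV a b] by (simp add: inner_vec_def)
qed

lemma det_add_rank_one:
  assumes "(Y::real^'n^'n) ** Z = mat 1"
  shows "det (Y + (\<chi> j k. a$j * b$k)) = det Y * (1 + (Z *v a) \<bullet> b)"
proof -
  have "Y ** (\<chi> j k. (Z *v a)$j * b$k) = (\<chi> j k. (Y *v (Z *v a))$j * b$k)"
    by (simp add: vec_eq_iff matrix_matrix_mult_def matrix_vector_mult_def sum_distrib_right mult.assoc)
  then have "Y + (\<chi> j k. a$j * b$k) = Y ** (mat 1 + (\<chi> j k. (Z *v a)$j * b$k))"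
    by (simp add: matrix_add_ldistrib matrix_vector_mul_assoc assms)
  then show ?thesis by (simp add: det_mul det_mat_1_add_rank_one)
qed

definition outer_prod :: "real^'n \<Rightarrow> real^'n^'n" where
  "outer_prod q = (\<chi> j k. q$j * q$k)"

lemma outer_prod_quadratic_form: "x \<bullet> (outer_prod q *v x) = (q \<bullet> x)\<^sup>2"
  by (simp add: outer_prod_def matrix_vector_mult_def inner_vec_def power2_eq_square
      sum_distrib_left sum_distrib_right algebra_simps)

lemma psd_mat_outer_prod: "psd_mat (outer_prod q)"
  unfolding psd_mat_def sym_mat_def outer_prod_quadratic_form
  by (simp add: vec_eq_iff outer_prod_def transpose_def mult.commute)

lemma quadratic_nonneg_imp_discriminant_le:
  fixes a b c :: real
  assumes "0 \<le> c" and nonneg: "\<And>t. 0 \<le> a + 2*t*b + t\<^sup>2 * c"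
  shows "b\<^sup>2 \<le> a * c"
proof (cases "c = 0")
  case True
  have "0 \<le> a + 2 * (- (a + 1) / (2 * b)) * b + (- (a + 1) / (2 * b))\<^sup>2 * c" by (rule nonneg)
  then have "b = 0" using True by (cases "b = 0") (simp_all add: field_simps)
  then show ?thesis using True by simp
next
  case False
  have "0 \<le> a + 2 * (- b / c) * b + (- b / c)\<^sup>2 * c" by (rule nonneg)
  also have "\<dots> = (a * c - b\<^sup>2) / c" using False by (simp add: field_simps power2_eq_square)
  finally show ?thesis using False assms(1) by (simp add: zero_le_divide_iff)
qed

lemma psd_mat_diag_nonneg:
  assumes "psd_mat (Q::real^'n^'n)"
  shows "0 \<le> Q$k$k"
proof -
  have "0 \<le> axis k 1 \<bullet> (Q *v axis k 1)" using assms unfolding psd_mat_def by blast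
  then show ?thesis by (simp add: inner_axis' matrix_vector_axis_nth)
qed

lemma psd_mat_cauchy_schwarz:
  assumes "psd_mat (Q::real^'n^'n)"
  shows "((Q *v x)$k)\<^sup>2 \<le> (x \<bullet> (Q *v x)) * Q$k$k"
proof (rule quadratic_nonneg_imp_discriminant_le)
  have nonneg: "0 \<le> y \<bullet> (Q *v y)" for y using assms by (simp add: psd_mat_def)
  show "0 \<le> Q$k$k" using assms by (rule psd_mat_diag_nonneg)
  fix t
  have cross: "x \<bullet> (Q *v axis k 1) = (Q *v x)$k"
    using inner_matrix_vector_transpose[of x Q "axis k 1"] assms by (simp add: psd_mat_sym inner_axis)
  have "0 \<le> (x + t *\<^sub>R axis k 1) \<bullet> (Q *v (x + t *\<^sub>R axis k 1))" by (rule nonneg)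
  also have "\<dots> = x \<bullet> (Q *v x) + t * (x \<bullet> (Q *v axis k 1)) + t * (axis k 1 \<bullet> (Q *v x))
      + t\<^sup>2 * (axis k 1 \<bullet> (Q *v axis k 1))"
    by (simp add: matrix_vector_right_distrib inner_add_left inner_add_right
        matrix_vector_mult_scaleR power2_eq_square distrib_left)
  also have "\<dots> = x \<bullet> (Q *v x) + 2*t*(Q *v x)$k + t\<^sup>2 * Q$k$k"
    unfolding cross by (simp add: inner_axis' matrix_vector_axis_nth)
  finally show "0 \<le> x \<bullet> (Q *v x) + 2*t*(Q *v x)$k + t\<^sup>2 * Q$k$k" .
qed

lemma psd_mat_diag_eq_0:
  assumes "psd_mat (Q::real^'n^'n)" "Q$j$j = 0"
  shows "Q$j$k = 0"
  using psd_mat_cauchy_schwarz[OF assms(1), of "axis k 1" j] assms(2)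
  by (simp add: matrix_vector_axis_nth)

lemma psd_mat_diff_outer_prod_column:
  assumes "psd_mat (Q::real^'n^'n)" "Q$k$k > 0"
  defines "q \<equiv> (\<chi> j. Q$j$k / sqrt (Q$k$k))"
  shows "psd_mat (Q - outer_prod q)"
  unfolding psd_mat_def sym_mat_def
proof (intro conjI allI)
  have "transpose (outer_prod q) = outer_prod q"
    using psd_mat_outer_prod psd_mat_sym by blast
  then show "transpose (Q - outer_prod q) = Q - outer_prod q"
    using assms(1) by (simp add: transpose_diff psd_mat_sym)
  fix x :: "real^'n"
  have "q \<bullet> x = (\<Sum>j\<in>UNIV. Q$j$k * x$j) / sqrt (Q$k$k)"
    by (simp add: q_def inner_vec_def sum_divide_distrib)
  also have "(\<Sum>j\<in>UNIV. Q$j$k * x$j) = (Q *v x)$k"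
    unfolding matrix_vector_mult_def vec_lambda_beta
    using assms(1) by (intro sum.cong refl) (metis psd_mat_def sym_mat_nth)
  finally have "(q \<bullet> x)\<^sup>2 = ((Q *v x)$k)\<^sup>2 / Q$k$k"
    using assms(2) by (simp add: power_divide)
  also have "\<dots> \<le> x \<bullet> (Q *v x)"
    using psd_mat_cauchy_schwarz[OF assms(1), of x k] assms(2) by (simp add: pos_divide_le_eq)
  finally have "(q \<bullet> x)\<^sup>2 \<le> x \<bullet> (Q *v x)" .
  then show "0 \<le> x \<bullet> ((Q - outer_prod q) *v x)"
    by (simp add: matrix_vector_mult_diff_rdistrib inner_diff_right outer_prod_quadratic_form)
qed

text \<open>Subtracting the outer product of column \<open>k\<close> scaled by \<open>1 / sqrt (Q$k$k)\<close> keeps \<open>Q\<close>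
  positive semidefinite and clears row and column \<open>k\<close>, so the induction is on the number of
  nonzero diagonal entries.\<close>
lemma psd_mat_sum_outer_prod:
  "psd_mat (Q::real^'n^'n) \<Longrightarrow> \<exists>qs. Q = sum_list (map outer_prod qs)"
proof (induction "card {j. Q$j$j \<noteq> 0}" arbitrary: Q rule: less_induct)
  case less
  show ?case
  proof (cases "\<forall>k. Q$k$k = 0")
    case True
    then have "Q = 0" using psd_mat_diag_eq_0[OF less.prems] by (simp add: vec_eq_iff)
    then show ?thesis by (intro exI[of _ "[]"]) simp
  next
    case False
    then obtain k where k: "Q$k$k \<noteq> 0" by blast
    with psd_mat_diag_nonneg[OF less.prems, of k] have pos: "Q$k$k > 0" by simp
    define q where "q = (\<chi> j. Q$j$k / sqrt (Q$k$k))"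
    define Q' where "Q' = Q - outer_prod q"
    have psd': "psd_mat Q'"
      unfolding Q'_def q_def by (rule psd_mat_diff_outer_prod_column[OF less.prems pos])
    have diag': "Q'$j$j = Q$j$j - (Q$j$k)\<^sup>2 / Q$k$k" for j
      using pos by (simp add: Q'_def outer_prod_def q_def power2_eq_square real_sqrt_mult[symmetric])
    have "{j. Q'$j$j \<noteq> 0} \<subseteq> {j. Q$j$j \<noteq> 0} - {k}"
      using psd_mat_diag_eq_0[OF less.prems] pos by (auto simp: diag' power2_eq_square)
    then have "card {j. Q'$j$j \<noteq> 0} \<le> card ({j. Q$j$j \<noteq> 0} - {k})"
      by (intro card_mono) auto
    also have "\<dots> < card {j. Q$j$j \<noteq> 0}"
      using k by (intro card_Diff1_less) auto
    finally obtain qs where "Q' = sum_list (map outer_prod qs)" using less.hyps psd' by blast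
    then have "Q = sum_list (map outer_prod (q # qs))" by (simp add: Q'_def algebra_simps)
    then show ?thesis by blast
  qed
qed

lemma det_less_det_add_outer_prod:
  assumes "pd_mat (Y::real^'n^'n)" "q \<noteq> 0"
  shows "det Y < det (Y + outer_prod q)"
proof -
  obtain Z where Z: "Y ** Z = mat 1" "pd_mat Z" using pd_mat_inverse[OF assms(1)] by metis
  have "det (Y + outer_prod q) = det Y * (1 + (Z *v q) \<bullet> q)"
    unfolding outer_prod_def by (rule det_add_rank_one[OF Z(1)])
  moreover have "(Z *v q) \<bullet> q > 0"
    using Z(2) assms(2) by (simp add: pd_mat_def inner_commute)
  then have "det Y * 1 < det Y * (1 + (Z *v q) \<bullet> q)"
    using det_pos_if_pd_mat[OF assms(1)] by (intro mult_strict_left_mono) auto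
  ultimately show ?thesis by simp
qed

lemma det_le_det_add_sum_outer_prod:
  assumes "pd_mat (Y::real^'n^'n)"
  shows "det Y \<le> det (Y + sum_list (map outer_prod qs)) \<and>
    (sum_list (map outer_prod qs) \<noteq> 0 \<longrightarrow> det Y < det (Y + sum_list (map outer_prod qs)))"
  using assms
proof (induction qs arbitrary: Y)
  case (Cons q qs)
  have pd: "pd_mat (Y + outer_prod q)" using Cons.prems pd_mat_add_psd_mat psd_mat_outer_prod by blast
  have sum: "Y + sum_list (map outer_prod (q # qs)) = (Y + outer_prod q) + sum_list (map outer_prod qs)"
    by (simp add: add.assoc)
  show ?case
  proof (cases "q = 0")
    case True
    then have "outer_prod q = 0" by (simp add: outer_prod_def vec_eq_iff)
    then show ?thesis using Cons.IH[OF Cons.prems] by simp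
  next
    case False
    with Cons.prems have "det Y < det (Y + outer_prod q)" by (rule det_less_det_add_outer_prod)
    moreover have "det (Y + outer_prod q) \<le> det (Y + outer_prod q + sum_list (map outer_prod qs))"
      using Cons.IH[OF pd] by blast
    ultimately show ?thesis unfolding sum by (intro conjI impI; linarith)
  qed
qed simp

lemma det_le_det_add_psd_mat:
  assumes "pd_mat (Y::real^'n^'n)" "psd_mat M"
  shows "det Y \<le> det (Y + M)"
proof -
  obtain qs where "M = sum_list (map outer_prod qs)" using psd_mat_sum_outer_prod[OF assms(2)] by blast
  then show ?thesis using det_le_det_add_sum_outer_prod[OF assms(1), of qs] by simp
qed

lemma det_less_det_add_psd_mat:
  assumes "pd_mat (Y::real^'n^'n)" "psd_mat M" "M \<noteq> 0"
  shows "det Y < det (Y + M)"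
proof -
  obtain qs where "M = sum_list (map outer_prod qs)" using psd_mat_sum_outer_prod[OF assms(2)] by blast
  then show ?thesis using det_le_det_add_sum_outer_prod[OF assms(1), of qs] assms(3) by simp
qed

section \<open>Block structure and Fischer's inequality\<close>

definition sign_diag :: "'n set \<Rightarrow> real^'n^'n" where
  "sign_diag G = (\<chi> j k. if j = k then (if j \<in> G then 1 else -1) else 0)"

definition block_diag :: "'n set \<Rightarrow> real^'n^'n \<Rightarrow> real^'n^'n" where
  "block_diag G A = (\<chi> j k. if (j \<in> G) = (k \<in> G) then A$j$k else 0)"

definition off_block :: "'n set \<Rightarrow> real^'n^'n \<Rightarrow> real^'n^'n" where
  "off_block G A = (\<chi> j k. if j \<notin> G \<and> k \<in> G then A$j$k else 0)"

lemma sign_diag_mult_nth: "(sign_diag G ** A)$j$k = (if j \<in> G then A$j$k else - A$j$k)"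
proof -
  have "(\<lambda>m. sign_diag G $j$m * A$m$k) = (\<lambda>m. if m = j then (if j \<in> G then A$j$k else - A$j$k) else 0)"
    by (auto simp: sign_diag_def)
  then show ?thesis unfolding matrix_matrix_mult_def vec_lambda_beta by (simp only:) simp
qed

lemma mult_sign_diag_nth: "(A ** sign_diag G)$j$k = (if k \<in> G then A$j$k else - A$j$k)"
proof -
  have "(\<lambda>m. A$j$m * sign_diag G $m$k) = (\<lambda>m. if m = k then (if k \<in> G then A$j$k else - A$j$k) else 0)"
    by (auto simp: sign_diag_def)
  then show ?thesis unfolding matrix_matrix_mult_def vec_lambda_beta by (simp only:) simp
qed

lemma sign_diag_conj_nth:
  "(sign_diag G ** A ** sign_diag G)$j$k = (if (j \<in> G) = (k \<in> G) then A$j$k else - A$j$k)"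
  by (simp add: sign_diag_mult_nth mult_sign_diag_nth)

lemma sign_diag_square: "sign_diag G ** sign_diag G = mat 1"
proof -
  have "sign_diag G ** mat 1 ** sign_diag G = mat 1"
    unfolding vec_eq_iff sign_diag_conj_nth by (simp add: mat_def)
  then show ?thesis by simp
qed

lemma transpose_sign_diag: "transpose (sign_diag G) = sign_diag G"
  by (simp add: vec_eq_iff sign_diag_def transpose_def)

lemma det_sign_diag_conj: "det (sign_diag G ** A ** sign_diag G) = det A"
proof -
  have "det (sign_diag G) * det (sign_diag G) = 1"
    using sign_diag_square[of G] det_mul det_I by metis
  then show ?thesis by (simp add: det_mul)
qed

lemma block_diag_sign_diag_conj: "sign_diag G ** block_diag G A ** sign_diag G = block_diag G A"
  by (simp add: vec_eq_iff sign_diag_conj_nth block_diag_def)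

lemma off_block_sign_diag_conj: "sign_diag G ** off_block G A ** sign_diag G = - off_block G A"
  by (simp add: vec_eq_iff sign_diag_conj_nth off_block_def)

lemma block_diag_midpoint:
  "block_diag G A = (1 - 1/2) *\<^sub>R A + (1/2) *\<^sub>R (sign_diag G ** A ** transpose (sign_diag G))"
  by (simp add: vec_eq_iff block_diag_def transpose_sign_diag sign_diag_conj_nth)

lemma pd_mat_block_diag: "pd_mat A \<Longrightarrow> pd_mat (block_diag G A)"
  unfolding block_diag_midpoint
  using sign_diag_square by (intro pd_mat_convex_comb pd_mat_congruence) (auto simp: invertible_def)

lemma block_decomposition: "A = block_diag G A + off_block G A + off_block (- G) A"
  by (simp add: vec_eq_iff block_diag_def off_block_def)

lemma block_diag_compl: "block_diag (- G) A = block_diag G A"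
  by (simp add: vec_eq_iff block_diag_def)

lemma off_block_compl_transpose: "sym_mat A \<Longrightarrow> off_block (- G) A = transpose (off_block G A)"
  by (auto simp: vec_eq_iff off_block_def transpose_def sym_mat_nth)

lemma block_diag_fixed_nth:
  assumes "block_diag G Z = Z" "(j \<in> G) \<noteq> (k \<in> G)"
  shows "Z$j$k = 0"
  using arg_cong[OF assms(1), of "\<lambda>M. M$j$k"] assms(2) by (simp add: block_diag_def)

lemma block_diag_inverse:
  assumes "B ** Z = mat 1" "Z ** B = mat 1" "block_diag G B = B"
  shows "block_diag G Z = Z"
proof -
  let ?D = "sign_diag G"
  have "(?D ** Z ** ?D) ** B = (?D ** Z ** ?D) ** (?D ** B ** ?D)"
    using block_diag_sign_diag_conj[of G B] assms(3) by simp
  also have "\<dots> = ?D ** Z ** (?D ** ?D) ** B ** ?D" by (simp add: matrix_mul_assoc)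
  also have "\<dots> = ?D ** (Z ** B) ** ?D" by (simp add: sign_diag_square matrix_mul_assoc)
  also have "\<dots> = mat 1" by (simp add: assms(2) sign_diag_square)
  finally have DZD: "?D ** Z ** ?D = Z" using left_inverse_eq_right_inverse[OF assms(1)] by blast
  have "Z$j$k = 0" if "(j \<in> G) \<noteq> (k \<in> G)" for j k
    using arg_cong[OF DZD, of "\<lambda>M. M$j$k"] that by (simp add: sign_diag_conj_nth)
  then show ?thesis by (auto simp: vec_eq_iff block_diag_def)
qed

lemma off_block_mult_block_diag_mult_off_block:
  assumes "block_diag G Z = Z"
  shows "off_block G X ** Z ** off_block G Y = 0"
proof -
  have "(off_block G X ** Z)$j$b = 0" if "b \<notin> G" for j b
    unfolding matrix_matrix_mult_def using that block_diag_fixed_nth[OF assms]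
    by (auto simp: off_block_def intro!: sum.neutral)
  then show ?thesis
    unfolding vec_eq_iff matrix_matrix_mult_def[of "off_block G X ** Z"]
    by (auto simp: off_block_def intro!: sum.neutral)
qed

lemma block_elimination:
  fixes A B L Z :: "real^'n^'n"
  assumes A: "A = B + L + transpose L" and "B ** Z = mat 1" "Z ** B = mat 1" "transpose Z = Z"
    and LZL: "L ** Z ** L = 0" and UZU: "transpose L ** Z ** transpose L = 0"
  shows "(mat 1 - L ** Z) ** A ** transpose (mat 1 - L ** Z) = B - L ** Z ** transpose L"
proof -
  let ?U = "transpose L" and ?M = "L ** Z ** transpose L"
  have "(mat 1 - L ** Z) ** A = A - (L ** (Z ** B) + L ** Z ** L + ?M)"
    unfolding A by (simp add: matrix_diff_rdistrib matrix_add_ldistrib matrix_mul_assoc)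
  also have "\<dots> = B + ?U - ?M"
    by (simp add: assms(3) LZL A)
  finally have PA: "(mat 1 - L ** Z) ** A = B + ?U - ?M" .
  have "transpose (mat 1 - L ** Z) = mat 1 - Z ** ?U"
    by (simp add: transpose_diff matrix_transpose_mul assms(4))
  moreover have "(B + ?U - ?M) ** (Z ** ?U) = ?U"
    by (simp add: matrix_diff_rdistrib matrix_add_rdistrib matrix_mul_assoc[symmetric] assms(2))
      (simp add: matrix_mul_assoc UZU assms(2))
  ultimately show ?thesis
    unfolding PA by (simp add: matrix_diff_ldistrib)
qed

text \<open>With \<open>N = off_block G X ** Z\<close> we have \<open>N ** N = 0\<close>, so \<open>mat 1 + N\<close> inverts \<open>mat 1 - N\<close>;
  conjugation by \<open>sign_diag G\<close> turns one into the other, so both have the same determinant.\<close>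
lemma det_mat_1_minus_off_block_mult:
  assumes "block_diag G Z = Z"
  shows "det (mat 1 - off_block G X ** Z) * det (mat 1 - off_block G X ** Z) = 1"
proof -
  let ?D = "sign_diag G" and ?N = "off_block G X ** Z"
  have "?N ** ?N = 0"
    using off_block_mult_block_diag_mult_off_block[OF assms] by (simp add: matrix_mul_assoc)
  then have inverse: "(mat 1 - ?N) ** (mat 1 + ?N) = mat 1"
    by (simp add: matrix_diff_rdistrib matrix_add_ldistrib)
  have "?D ** ?N ** ?D = (?D ** off_block G X ** ?D) ** (?D ** Z ** ?D)"
    by (simp add: matrix_mul_assoc sign_diag_square) (simp add: matrix_mul_assoc[symmetric] sign_diag_square)
  also have "\<dots> = - ?N"
    using block_diag_sign_diag_conj[of G Z] assms by (simp add: off_block_sign_diag_conj matrix_neg_mult)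
  finally have "?D ** (mat 1 - ?N) ** ?D = mat 1 + ?N"
    by (simp add: matrix_diff_ldistrib matrix_diff_rdistrib sign_diag_square)
  then have "det (mat 1 + ?N) = det (mat 1 - ?N)"
    by (metis det_sign_diag_conj)
  then show ?thesis
    using inverse by (metis det_I det_mul)
qed

lemma fischer_inequality:
  assumes "pd_mat (A::real^'n^'n)"
  shows "det A \<le> det (block_diag G A)"
    and "det A = det (block_diag G A) \<Longrightarrow> off_block G A = 0"
proof -
  let ?B = "block_diag G A" and ?L = "off_block G A"
  obtain Z where Z: "?B ** Z = mat 1" "Z ** ?B = mat 1" "pd_mat Z"
    using pd_mat_inverse[OF pd_mat_block_diag[OF assms]] by blast
  have Zblock: "block_diag G Z = Z"
    using block_diag_inverse[OF Z(1,2)] by (simp add: block_diag_def vec_eq_iff)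
  let ?M = "?L ** Z ** transpose ?L" and ?P = "mat 1 - ?L ** Z"
  have symA: "sym_mat A" using assms by (simp add: pd_mat_def)
  have PAP: "?P ** A ** transpose ?P = ?B - ?M"
  proof (rule block_elimination)
    show "A = ?B + ?L + transpose ?L"
      using block_decomposition[of A G] off_block_compl_transpose[OF symA] by simp
    show "transpose Z = Z" using Z(3) by (rule pd_mat_sym)
    show "?L ** Z ** ?L = 0" by (rule off_block_mult_block_diag_mult_off_block[OF Zblock])
    show "transpose ?L ** Z ** transpose ?L = 0"
      unfolding off_block_compl_transpose[OF symA, symmetric]
      using Zblock by (intro off_block_mult_block_diag_mult_off_block) (simp add: block_diag_compl)
  qed (use Z in auto)
  have detP: "det ?P * det ?P = 1" by (rule det_mat_1_minus_off_block_mult[OF Zblock])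
  then have "invertible ?P" by (metis invertible_det_nz mult_zero_left zero_neq_one)
  then have pd: "pd_mat (?B - ?M)" using pd_mat_congruence[OF assms] PAP by metis
  have "det (?B - ?M) = det A"
    using detP by (simp flip: PAP add: det_mul)
  moreover have psd: "psd_mat ?M" using pd_mat_imp_psd_mat[OF Z(3)] by (rule psd_mat_congruence)
  ultimately show "det A \<le> det ?B"
    using det_le_det_add_psd_mat[OF pd psd] by simp
  assume "det A = det ?B"
  then have "?M = 0"
    using det_less_det_add_psd_mat[OF pd psd] \<open>det (?B - ?M) = det A\<close> by fastforce
  then show "?L = 0" using congruence_eq_0_imp_eq_0[OF Z(3)] by blast
qed

lemma det_add_off_block_even:
  assumes "block_diag G A = A" "block_diag G E = 0"
  shows "det (A + (- t) *\<^sub>R E) = det (A + t *\<^sub>R E)"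
proof -
  have "sign_diag G ** (A + t *\<^sub>R E) ** sign_diag G = A + (- t) *\<^sub>R E"
  proof (unfold vec_eq_iff sign_diag_conj_nth, intro allI)
    fix j k
    show "(if (j \<in> G) = (k \<in> G) then (A + t *\<^sub>R E) $ j $ k else - (A + t *\<^sub>R E) $ j $ k)
        = (A + (- t) *\<^sub>R E) $ j $ k"
      using arg_cong[OF assms(2), of "\<lambda>M. M$j$k"] block_diag_fixed_nth[OF assms(1), of j k]
      by (auto simp: block_diag_def)
  qed
  then show ?thesis by (metis det_sign_diag_conj)
qed

lemma even_has_derivative_0_eq_0:
  fixes f :: "real \<Rightarrow> real"
  assumes "\<And>t. f (- t) = f t" "(f has_field_derivative D) (at 0)"
  shows "D = 0"
proof -
  have "(f has_field_derivative D) (at (- 0))" using assms(2) by simp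
  then have "((\<lambda>t. f (- t)) has_field_derivative - D) (at 0)" by (simp only: DERIV_mirror)
  then have "(f has_field_derivative - D) (at 0)" using assms(1) by simp
  then have "D = - D" using DERIV_unique[OF assms(2)] by blast
  then show ?thesis by simp
qed

lemma ln_det_sum_off_block_line_has_derivative_0:
  assumes "finite N" "\<forall>i\<in>N. pd_mat (A i)"
    and "\<forall>i\<in>N. block_diag G (A i) = A i" "\<forall>i\<in>N. block_diag G (E i) = 0"
  shows "((\<lambda>t. \<Sum>i\<in>N. ln (det (A i + t *\<^sub>R E i))) has_field_derivative 0) (at 0)"
proof -
  have "\<forall>i\<in>N. \<exists>D. ((\<lambda>t. ln (det (A i + t *\<^sub>R E i))) has_field_derivative D) (at 0)"
    using assms(2) det_pos_if_pd_mat ln_det_line_has_derivative by blast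
  then obtain D where "\<forall>i\<in>N. ((\<lambda>t. ln (det (A i + t *\<^sub>R E i))) has_field_derivative D i) (at 0)"
    by metis
  then have deriv: "((\<lambda>t. \<Sum>i\<in>N. ln (det (A i + t *\<^sub>R E i))) has_field_derivative (\<Sum>i\<in>N. D i)) (at 0)"
    by (intro DERIV_sum) auto
  have "det (A i + (- t) *\<^sub>R E i) = det (A i + t *\<^sub>R E i)" if "i \<in> N" for i t
    using det_add_off_block_even[of G "A i" "E i" t] assms(3,4) that by blast
  then have "(\<Sum>i\<in>N. ln (det (A i + (- t) *\<^sub>R E i))) = (\<Sum>i\<in>N. ln (det (A i + t *\<^sub>R E i)))" for t
    by (intro sum.cong) auto
  with deriv have "(\<Sum>i\<in>N. D i) = 0" by (intro even_has_derivative_0_eq_0) auto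
  with deriv show ?thesis by simp
qed

section \<open>The objective\<close>

definition diag_loss :: "'i set \<Rightarrow> ('i \<Rightarrow> real^'p^'p) \<Rightarrow> ('i \<Rightarrow> real^'p^'p) \<Rightarrow> real" where
  "diag_loss N S Om = (1 / sqrt (real (card N))) *
     (\<Sum>i\<in>N. (\<Sum>u\<in>UNIV. Om i $ u $ u * S i $ u $ u) - ln (det (Om i)))"

definition edge_loss ::
  "'i set \<Rightarrow> ('i \<Rightarrow> real^'p^'p) \<Rightarrow> real \<Rightarrow> ('i \<Rightarrow> real^'p^'p) \<Rightarrow> 'p \<Rightarrow> 'p \<Rightarrow> real" where
  "edge_loss N S lam Om u v = (1 / sqrt (real (card N))) * (\<Sum>i\<in>N. Om i $ u $ v * S i $ v $ u)
     + lam * sqrt (\<Sum>i\<in>N. (Om i $ u $ v)\<^sup>2)"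

lemma trace_mult_split:
  "trace ((X::real^'p^'p) ** S) = (\<Sum>u\<in>UNIV. X$u$u * S$u$u) + (\<Sum>u\<in>UNIV. \<Sum>v\<in>UNIV - {u}. X$u$v * S$v$u)"
proof -
  have "(\<Sum>v\<in>UNIV. X$u$v * S$v$u) = X$u$u * S$u$u + (\<Sum>v\<in>UNIV - {u}. X$u$v * S$v$u)" for u
    by (rule sum.remove) simp_all
  then show ?thesis by (simp add: trace_def matrix_matrix_mult_def sum.distrib)
qed

lemma L_obj_split:
  "L_obj N S lam Om = diag_loss N S Om + (\<Sum>u\<in>UNIV. \<Sum>v\<in>UNIV - {u}. edge_loss N S lam Om u v)"
proof -
  let ?c = "1 / sqrt (real (card N))"
  have "(\<Sum>i\<in>N. trace (Om i ** S i) - ln (det (Om i))) =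
      (\<Sum>i\<in>N. (\<Sum>u\<in>UNIV. Om i $ u $ u * S i $ u $ u) - ln (det (Om i)))
      + (\<Sum>i\<in>N. \<Sum>u\<in>UNIV. \<Sum>v\<in>UNIV - {u}. Om i $ u $ v * S i $ v $ u)"
    unfolding trace_mult_split sum.distrib[symmetric] by (rule sum.cong) (auto simp: sum.distrib)
  also have "(\<Sum>i\<in>N. \<Sum>u\<in>UNIV. \<Sum>v\<in>UNIV - {u}. Om i $ u $ v * S i $ v $ u)
      = (\<Sum>u\<in>UNIV. \<Sum>v\<in>UNIV - {u}. \<Sum>i\<in>N. Om i $ u $ v * S i $ v $ u)"
    by (subst sum.swap) (intro sum.cong refl sum.swap)
  finally have "(\<Sum>i\<in>N. trace (Om i ** S i) - ln (det (Om i))) =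
      (\<Sum>i\<in>N. (\<Sum>u\<in>UNIV. Om i $ u $ u * S i $ u $ u) - ln (det (Om i)))
      + (\<Sum>u\<in>UNIV. \<Sum>v\<in>UNIV - {u}. \<Sum>i\<in>N. Om i $ u $ v * S i $ v $ u)" .
  then show ?thesis
    unfolding L_obj_def diag_loss_def edge_loss_def
    by (simp add: sum.distrib sum_distrib_left algebra_simps)
qed

lemma inner_add_penalty_nonneg:
  fixes a b :: "'i \<Rightarrow> real"
  assumes "0 \<le> c" "c * sqrt (\<Sum>i\<in>N. (b i)\<^sup>2) \<le> lam"
  shows "0 \<le> c * (\<Sum>i\<in>N. a i * b i) + lam * sqrt (\<Sum>i\<in>N. (a i)\<^sup>2)"
proof -
  let ?A = "sqrt (\<Sum>i\<in>N. (a i)\<^sup>2)" and ?B = "sqrt (\<Sum>i\<in>N. (b i)\<^sup>2)"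
  have "\<bar>\<Sum>i\<in>N. a i * b i\<bar> \<le> (\<Sum>i\<in>N. \<bar>a i\<bar> * \<bar>b i\<bar>)"
    by (rule order_trans[OF sum_abs]) (simp add: abs_mult)
  also have "\<dots> \<le> ?A * ?B"
    using L2_set_mult_ineq[of a b N] by (simp add: L2_set_def)
  finally have cauchy_schwarz: "\<bar>\<Sum>i\<in>N. a i * b i\<bar> \<le> ?A * ?B" .
  have "- (c * (\<Sum>i\<in>N. a i * b i)) \<le> c * \<bar>\<Sum>i\<in>N. a i * b i\<bar>"
    using mult_left_mono[OF abs_ge_minus_self assms(1)] by simp
  also have "\<dots> \<le> c * (?A * ?B)"
    using mult_left_mono[OF cauchy_schwarz assms(1)] .
  also have "\<dots> = (c * ?B) * ?A" by simp
  also have "\<dots> \<le> lam * ?A"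
    using assms(2) by (intro mult_right_mono) (auto simp: sum_nonneg)
  finally show ?thesis by simp
qed

lemma scaled_sqrt_sum_le_iff:
  assumes "n > 0" "0 \<le> lam" "0 \<le> Q"
  shows "1 / sqrt n * sqrt Q \<le> lam \<longleftrightarrow> 1 / n * Q \<le> lam\<^sup>2"
proof -
  have "1 / sqrt n * sqrt Q \<le> lam \<longleftrightarrow> sqrt (1 / n * Q) \<le> sqrt (lam\<^sup>2)"
    using assms(2) by (simp add: real_sqrt_divide)
  also have "\<dots> \<longleftrightarrow> 1 / n * Q \<le> lam\<^sup>2" by (rule real_sqrt_le_iff)
  finally show ?thesis .
qed

lemma edge_loss_nonneg:
  assumes "finite N" "N \<noteq> {}" "0 \<le> lam"
    and "1 / real (card N) * (\<Sum>i\<in>N. (S i $ v $ u)\<^sup>2) \<le> lam\<^sup>2"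
  shows "0 \<le> edge_loss N S lam Om u v"
proof -
  have "1 / sqrt (real (card N)) * sqrt (\<Sum>i\<in>N. (S i $ v $ u)\<^sup>2) \<le> lam"
    using assms by (subst scaled_sqrt_sum_le_iff) (auto simp: card_gt_0_iff sum_nonneg)
  then show ?thesis
    unfolding edge_loss_def by (intro inner_add_penalty_nonneg) auto
qed

lemma L_obj_diff_block_diag:
  "L_obj N S lam Om - L_obj N S lam (\<lambda>i. block_diag G (Om i)) =
     1 / sqrt (real (card N)) * (\<Sum>i\<in>N. ln (det (block_diag G (Om i))) - ln (det (Om i)))
     + (\<Sum>a\<in>UNIV. \<Sum>b\<in>UNIV - {a}. if (a \<in> G) = (b \<in> G) then 0 else edge_loss N S lam Om a b)"
proof -
  have "diag_loss N S Om - diag_loss N S (\<lambda>i. block_diag G (Om i)) =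
      1 / sqrt (real (card N)) * (\<Sum>i\<in>N. ln (det (block_diag G (Om i))) - ln (det (Om i)))"
    unfolding diag_loss_def right_diff_distrib[symmetric] sum_subtractf[symmetric]
    by (simp add: block_diag_def)
  moreover have "edge_loss N S lam (\<lambda>i. block_diag G (Om i)) a b
      = (if (a \<in> G) = (b \<in> G) then edge_loss N S lam Om a b else 0)" for a b
    by (simp add: edge_loss_def block_diag_def)
  then have "(\<Sum>a\<in>UNIV. \<Sum>b\<in>UNIV - {a}. edge_loss N S lam Om a b)
      - (\<Sum>a\<in>UNIV. \<Sum>b\<in>UNIV - {a}. edge_loss N S lam (\<lambda>i. block_diag G (Om i)) a b)
      = (\<Sum>a\<in>UNIV. \<Sum>b\<in>UNIV - {a}. if (a \<in> G) = (b \<in> G) then 0 else edge_loss N S lam Om a b)"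
    unfolding sum_subtractf[symmetric] by (intro sum.cong refl) auto
  ultimately show ?thesis unfolding L_obj_split by linarith
qed

lemma minimizer_cross_zero_if_small_cross_covariance:
  fixes N :: "'i set" and S Omh :: "'i \<Rightarrow> real^'p^'p" and G :: "'p set"
  assumes N: "finite N" "N \<noteq> {}" and symS: "\<forall>i\<in>N. sym_mat (S i)" and lam: "0 \<le> lam"
    and minimizer: "is_minimizer N S lam Omh"
    and small: "\<And>u v. u \<in> G \<Longrightarrow> v \<notin> G \<Longrightarrow> 1 / real (card N) * (\<Sum>i\<in>N. (S i $ u $ v)\<^sup>2) \<le> lam\<^sup>2"
    and "i \<in> N" "u \<in> G" "v \<notin> G"
  shows "Omh i $ u $ v = 0"
proof -
  let ?B = "\<lambda>i. block_diag G (Omh i)"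
  let ?gap = "\<lambda>i. ln (det (?B i)) - ln (det (Omh i))"
  have pd: "pd_mat (Omh i)" if "i \<in> N" for i using minimizer that by (simp add: is_minimizer_def)
  have "0 \<le> edge_loss N S lam Omh a b" if "(a \<in> G) \<noteq> (b \<in> G)" for a b
  proof (rule edge_loss_nonneg[OF N lam])
    have "(\<Sum>i\<in>N. (S i $ b $ a)\<^sup>2) = (\<Sum>i\<in>N. (S i $ a $ b)\<^sup>2)"
      using symS by (intro sum.cong refl) (metis sym_mat_nth)
    then show "1 / real (card N) * (\<Sum>i\<in>N. (S i $ b $ a)\<^sup>2) \<le> lam\<^sup>2"
      using small[of a b] small[of b a] that by (cases "a \<in> G") auto
  qed
  then have "1 / sqrt (real (card N)) * (\<Sum>i\<in>N. ?gap i) \<le> L_obj N S lam Omh - L_obj N S lam ?B"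
    unfolding L_obj_diff_block_diag by (simp add: sum_nonneg)
  moreover have "\<forall>i\<in>N. pd_mat (?B i)" using pd pd_mat_block_diag by blast
  then have "L_obj N S lam Omh \<le> L_obj N S lam ?B"
    using minimizer by (simp add: is_minimizer_def)
  ultimately have "1 / sqrt (real (card N)) * (\<Sum>i\<in>N. ?gap i) \<le> 0" by linarith
  then have "(\<Sum>i\<in>N. ?gap i) \<le> 0"
    using N by (simp add: divide_le_0_iff)
  moreover have gap_nonneg: "0 \<le> ?gap i" if "i \<in> N" for i
    using fischer_inequality(1)[OF pd[OF that], of G] det_pos_if_pd_mat[OF pd[OF that]] by simp
  ultimately have "?gap i = 0"
    using sum_nonneg_eq_0_iff[OF N(1) gap_nonneg] sum_nonneg[of N ?gap] \<open>i \<in> N\<close> by auto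
  then have "det (Omh i) = det (block_diag (- G) (Omh i))"
    using det_pos_if_pd_mat[OF pd] det_pos_if_pd_mat[OF pd_mat_block_diag[OF pd]] \<open>i \<in> N\<close>
    by (simp add: block_diag_compl)
  then have "off_block (- G) (Omh i) = 0"
    using fischer_inequality(2)[OF pd[OF \<open>i \<in> N\<close>]] by blast
  then show ?thesis
    using assms(7-) by (simp add: vec_eq_iff off_block_def) (metis ComplI)
qed

definition sym_pair_mat :: "'n \<Rightarrow> 'n \<Rightarrow> real \<Rightarrow> real^'n^'n" where
  "sym_pair_mat u v x = (\<chi> a b. if (a = u \<and> b = v) \<or> (a = v \<and> b = u) then x else 0)"

lemma sum_off_diagonal_pair:
  fixes u v :: "'n::finite" and K :: real
  assumes "u \<noteq> v"
  shows "(\<Sum>a\<in>UNIV. \<Sum>b\<in>UNIV - {a}. if (a = u \<and> b = v) \<or> (a = v \<and> b = u) then K else 0) = 2 * K"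
proof -
  have "(\<Sum>b\<in>UNIV - {a}. if (a = u \<and> b = v) \<or> (a = v \<and> b = u) then K else 0)
      = (if a = u then K else 0) + (if a = v then K else 0)" for a
    using assms by (cases "a = u"; cases "a = v") (simp_all add: sum.delta)
  then show ?thesis by (simp add: sum.distrib)
qed

lemma edge_loss_add_sym_pair_mat:
  fixes N :: "'i set" and S Om :: "'i \<Rightarrow> real^'p^'p"
  assumes "u \<noteq> v" and symS: "\<forall>i\<in>N. sym_mat (S i)"
    and zero: "\<forall>i\<in>N. Om i $ u $ v = 0 \<and> Om i $ v $ u = 0" and "0 \<le> t"
  defines "E \<equiv> \<lambda>i. sym_pair_mat u v (- S i $ u $ v)"
    and "c \<equiv> 1 / sqrt (real (card N))" and "ns \<equiv> sqrt (\<Sum>i\<in>N. (S i $ u $ v)\<^sup>2)"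
  shows "edge_loss N S lam (\<lambda>i. Om i + t *\<^sub>R E i) a b = edge_loss N S lam Om a b
      + (if (a = u \<and> b = v) \<or> (a = v \<and> b = u) then t * ns * (lam - c * ns) else 0)"
proof (cases "(a = u \<and> b = v) \<or> (a = v \<and> b = u)")
  case True
  have "S i $ v $ u = S i $ u $ v" if "i \<in> N" for i
    using sym_mat_nth[of "S i" v u] symS that by blast
  with True have entries: "Om i $ a $ b = 0" "S i $ b $ a = S i $ u $ v" "E i $ a $ b = - S i $ u $ v"
    if "i \<in> N" for i
    using that zero \<open>u \<noteq> v\<close> by (auto simp: E_def sym_pair_mat_def)
  have "(\<Sum>i\<in>N. (t * - S i $ u $ v)\<^sup>2) = t\<^sup>2 * ns\<^sup>2"
    by (simp add: ns_def power_mult_distrib sum_distrib_left sum_nonneg)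
  then have "sqrt (\<Sum>i\<in>N. (t * - S i $ u $ v)\<^sup>2) = t * ns"
    using \<open>0 \<le> t\<close> by (simp add: real_sqrt_mult ns_def sum_nonneg)
  moreover have "(\<Sum>i\<in>N. t * - S i $ u $ v * S i $ u $ v) = - t * ns\<^sup>2"
    by (simp add: ns_def sum_nonneg sum_distrib_left power2_eq_square mult.assoc)
  ultimately show ?thesis
    using True unfolding edge_loss_def c_def[symmetric]
    by (simp add: entries cong: sum.cong) (simp add: algebra_simps power2_eq_square)
next
  case False
  then have "E i $ a $ b = 0" for i by (auto simp: E_def sym_pair_mat_def)
  with False show ?thesis by (auto simp: edge_loss_def)
qed

lemma L_obj_add_sym_pair_mat:
  fixes N :: "'i set" and S Om :: "'i \<Rightarrow> real^'p^'p"
  assumes "u \<noteq> v" and "\<forall>i\<in>N. sym_mat (S i)"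
    and "\<forall>i\<in>N. Om i $ u $ v = 0 \<and> Om i $ v $ u = 0" and "0 \<le> t"
  defines "E \<equiv> \<lambda>i. sym_pair_mat u v (- S i $ u $ v)"
    and "c \<equiv> 1 / sqrt (real (card N))" and "ns \<equiv> sqrt (\<Sum>i\<in>N. (S i $ u $ v)\<^sup>2)"
  shows "L_obj N S lam (\<lambda>i. Om i + t *\<^sub>R E i) = L_obj N S lam Om
     + c * (\<Sum>i\<in>N. ln (det (Om i)) - ln (det (Om i + t *\<^sub>R E i))) + 2 * (t * ns * (lam - c * ns))"
proof -
  have "E i $ a $ a = 0" for i a
    using \<open>u \<noteq> v\<close> by (auto simp: E_def sym_pair_mat_def)
  then have diag: "diag_loss N S (\<lambda>i. Om i + t *\<^sub>R E i) =
      diag_loss N S Om + c * (\<Sum>i\<in>N. ln (det (Om i)) - ln (det (Om i + t *\<^sub>R E i)))"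
    unfolding diag_loss_def c_def[symmetric] distrib_left[symmetric] sum.distrib[symmetric]
    by (intro arg_cong[where f = "\<lambda>x. c * x"] sum.cong refl) simp
  have edge: "edge_loss N S lam (\<lambda>i. Om i + t *\<^sub>R E i) a b = edge_loss N S lam Om a b
      + (if (a = u \<and> b = v) \<or> (a = v \<and> b = u) then t * ns * (lam - c * ns) else 0)" for a b
    unfolding E_def c_def ns_def by (rule edge_loss_add_sym_pair_mat[OF assms(1-4)])
  show ?thesis
    unfolding L_obj_split diag edge sum.distrib sum_off_diagonal_pair[OF \<open>u \<noteq> v\<close>] by simp
qed

lemma eventually_L_obj_add_sym_pair_mat_less:
  fixes N :: "'i set" and S Om :: "'i \<Rightarrow> real^'p^'p"
  assumes "finite N" "\<forall>i\<in>N. sym_mat (S i)" "\<forall>i\<in>N. pd_mat (Om i)"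
    and block: "\<forall>i\<in>N. block_diag G (Om i) = Om i" and "u \<in> G" "v \<notin> G"
  defines "E \<equiv> \<lambda>i. sym_pair_mat u v (- S i $ u $ v)"
    and "c \<equiv> 1 / sqrt (real (card N))" and "ns \<equiv> sqrt (\<Sum>i\<in>N. (S i $ u $ v)\<^sup>2)"
  assumes "0 < ns" "lam < c * ns"
  shows "\<forall>\<^sub>F t in at_right 0. L_obj N S lam (\<lambda>i. Om i + t *\<^sub>R E i) < L_obj N S lam Om"
proof -
  define H where "H t = (\<Sum>i\<in>N. ln (det (Om i + t *\<^sub>R E i)))" for t
  define \<psi> where "\<psi> t = L_obj N S lam Om + c * (H 0 - H t) + 2 * (t * ns * (lam - c * ns))" for t
  have "u \<noteq> v" using assms(5,6) by blast
  have "block_diag G (E i) = 0" for i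
    using assms(5,6) by (auto simp: E_def sym_pair_mat_def block_diag_def vec_eq_iff)
  then have "(H has_field_derivative 0) (at 0)"
    unfolding H_def using assms(1,3) block by (intro ln_det_sum_off_block_line_has_derivative_0) auto
  then have "(\<psi> has_field_derivative 2 * (ns * (lam - c * ns))) (at 0)"
    unfolding \<psi>_def by (auto intro!: derivative_eq_intros)
  moreover have "2 * (ns * (lam - c * ns)) < 0"
    using assms(10,11) by (simp add: mult_pos_neg)
  ultimately obtain d where "d > 0" "\<forall>h>0. h < d \<longrightarrow> \<psi> (0 + h) < \<psi> 0"
    using DERIV_neg_dec_right by blast
  then have decrease: "\<forall>\<^sub>F t in at_right 0. \<psi> t < \<psi> 0"
    unfolding eventually_at_right_field by auto
  have zero: "\<forall>i\<in>N. Om i $ u $ v = 0 \<and> Om i $ v $ u = 0"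
    using block block_diag_fixed_nth assms(5,6) by blast
  have "L_obj N S lam (\<lambda>i. Om i + t *\<^sub>R E i) = \<psi> t" if "0 < t" for t
    using L_obj_add_sym_pair_mat[OF \<open>u \<noteq> v\<close> assms(2) zero less_imp_le[OF that]]
    by (simp add: \<psi>_def H_def E_def c_def ns_def sum_subtractf)
  moreover have "\<psi> 0 = L_obj N S lam Om" by (simp add: \<psi>_def)
  ultimately show ?thesis
    using decrease eventually_at_right_less[of "0::real"] by (auto elim: eventually_mono[OF eventually_conj])
qed

lemma small_cross_covariance_if_minimizer_cross_zero:
  fixes N :: "'i set" and S Omh :: "'i \<Rightarrow> real^'p^'p" and G :: "'p set"
  assumes N: "finite N" "N \<noteq> {}" and symS: "\<forall>i\<in>N. sym_mat (S i)"
    and minimizer: "is_minimizer N S lam Omh"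
    and zero: "\<And>i a b. i \<in> N \<Longrightarrow> a \<in> G \<Longrightarrow> b \<notin> G \<Longrightarrow> Omh i $ a $ b = 0"
    and "u \<in> G" "v \<notin> G"
  shows "1 / real (card N) * (\<Sum>i\<in>N. (S i $ u $ v)\<^sup>2) \<le> lam\<^sup>2"
proof (rule ccontr)
  assume big: "\<not> ?thesis"
  let ?c = "1 / sqrt (real (card N))" and ?ns = "sqrt (\<Sum>i\<in>N. (S i $ u $ v)\<^sup>2)"
  let ?E = "\<lambda>i. sym_pair_mat u v (- S i $ u $ v)"
  have pd: "\<forall>i\<in>N. pd_mat (Omh i)" using minimizer by (simp add: is_minimizer_def)
  have "Omh i $ a $ b = 0" if "i \<in> N" "(a \<in> G) \<noteq> (b \<in> G)" for i a b
    using zero[OF \<open>i \<in> N\<close>, of a b] zero[OF \<open>i \<in> N\<close>, of b a] that(2)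
      sym_mat_nth[of "Omh i" a b] pd \<open>i \<in> N\<close>
    by (cases "a \<in> G") (auto simp: pd_mat_def)
  then have block: "\<forall>i\<in>N. block_diag G (Omh i) = Omh i"
    by (auto simp: block_diag_def vec_eq_iff)
  have "lam < ?c * ?ns"
    using big N scaled_sqrt_sum_le_iff[of "real (card N)" "\<bar>lam\<bar>" "\<Sum>i\<in>N. (S i $ u $ v)\<^sup>2"]
    by (auto simp: card_gt_0_iff sum_nonneg)
  moreover have "0 < 1 / real (card N) * (\<Sum>i\<in>N. (S i $ u $ v)\<^sup>2)"
    using big zero_le_power2[of lam] by linarith
  then have "0 < ?ns" using N by (simp add: zero_less_divide_iff)
  ultimately have "\<forall>\<^sub>F t in at_right 0. L_obj N S lam (\<lambda>i. Omh i + t *\<^sub>R ?E i) < L_obj N S lam Omh"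
    using eventually_L_obj_add_sym_pair_mat_less[OF N(1) symS pd block assms(6,7)] by blast
  moreover have "\<forall>\<^sub>F t in at_right 0. \<forall>i\<in>N. pd_mat (Omh i + t *\<^sub>R ?E i)"
  proof (intro eventually_ball_finite N(1) ballI)
    fix i assume "i \<in> N"
    have "transpose (?E i) = ?E i" by (auto simp: sym_pair_mat_def transpose_def vec_eq_iff)
    with pd \<open>i \<in> N\<close> show "\<forall>\<^sub>F t in at_right 0. pd_mat (Omh i + t *\<^sub>R ?E i)"
      using eventually_pd_mat_add unfolding eventually_nhds_conv_at eventually_at_split by blast
  qed
  ultimately obtain t where "L_obj N S lam (\<lambda>i. Omh i + t *\<^sub>R ?E i) < L_obj N S lam Omh"
      "\<forall>i\<in>N. pd_mat (Omh i + t *\<^sub>R ?E i)"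
    using eventually_happens'[OF trivial_limit_at_right_real eventually_conj] by blast
  then show False using minimizer unfolding is_minimizer_def by force
qed

theorem theorem2:
  fixes N :: "'i set" and S Omh :: "'i \<Rightarrow> real^'p::finite^'p" and lam :: real
    and G1 G2 :: "'p set"
  assumes "CARD('p) \<ge> 2"
    and "finite N" and "N \<noteq> {}"
    and "\<forall>i\<in>N. psd_mat (S i)"
    and "lam > 0"
    and "is_minimizer N S lam Omh"
    and "G1 \<union> G2 = UNIV" and "G1 \<inter> G2 = {}" and "G1 \<noteq> {}" and "G2 \<noteq> {}"
  shows "(\<forall>u\<in>G1. \<forall>v\<in>G2. \<forall>i\<in>N. Omh i $ u $ v = 0) \<longleftrightarrow>
         (\<forall>u\<in>G1. \<forall>v\<in>G2. (1 / real (card N)) * (\<Sum>i\<in>N. (S i $ u $ v)\<^sup>2) \<le> lam\<^sup>2)"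
proof -
  have G2: "G2 = - G1" using assms(7,8) by blast
  have symS: "\<forall>i\<in>N. sym_mat (S i)" using assms(4) by (simp add: psd_mat_def)
  show ?thesis
  proof
    assume "\<forall>u\<in>G1. \<forall>v\<in>G2. \<forall>i\<in>N. Omh i $ u $ v = 0"
    then show "\<forall>u\<in>G1. \<forall>v\<in>G2. (1 / real (card N)) * (\<Sum>i\<in>N. (S i $ u $ v)\<^sup>2) \<le> lam\<^sup>2"
      using small_cross_covariance_if_minimizer_cross_zero[OF assms(2,3) symS assms(6), of G1] G2
      by blast
  next
    assume "\<forall>u\<in>G1. \<forall>v\<in>G2. (1 / real (card N)) * (\<Sum>i\<in>N. (S i $ u $ v)\<^sup>2) \<le> lam\<^sup>2"
    then show "\<forall>u\<in>G1. \<forall>v\<in>G2. \<forall>i\<in>N. Omh i $ u $ v = 0"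
      using minimizer_cross_zero_if_small_cross_covariance[OF assms(2,3) symS _ assms(6), of G1]
        assms(5) G2 by auto
  qed
qed

end
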